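(* Assume $\Gamma(0,0)=\delta-q\rho-\beta\psi_X'(0+)>0$, and let $$b_0=(\overline Z^{(q)})^{-1}\Big(\frac{\delta-q\rho}{q\beta}-\frac{\psi_X'(0+)}{q}\Big)>0,$$ which is the unique root of $\Gamma(0,b_0)=0$. Then: - $a^*=0$ (case (ii-1)) if $b_0\le(Z^{(q)})^{-1}(\beta^{-1})$; - $0<a^*<b^*$ (case (ii-2)) if $b_0>(Z^{(q)})^{-1}(\beta^{-1})$. Moreover, in both cases $$b_0\wedge(Z^{(q)})^{-1}(\beta^{-1})\le b^*\le b_0.$$
   Context: Let $Y$ be a spectrally positive Lévy process (not a subordinator) with Laplace exponent $\psi_Y(\theta)=\log\mathbb E[e^{-\theta Y_1}]$ and $\mathbb E[Y_1]=-\psi_Y'(0+)<\infty$. Fix $q>0$, $\delta>0$, $\beta\in(0,1)$, $\rho\in\mathbb R$, and let $\psi_X(\theta)=\psi_Y(\theta)+\delta\theta$. Scale functions: $\mathbb W^{(q)}$ (resp. $W^{(q)}$) vanishes on $(-\infty,0)$, is continuous and strictly increasing on $[0,\infty)$, and has Laplace transform $1/(\psi_Y(\theta)-q)$ (resp. $1/(\psi_X(\theta)-q)$) for large $\theta$. Let $\mathbb Z^{(q)}(x)=1+q\int_0^x\mathbb W^{(q)}$ and $Z^{(q)}(x)=1+q\int_0^xW^{(q)}$; the latter is strictly increasing on $[0,\infty)$ from $1$ to $\infty$. Let $\overline Z^{(q)}(x)=\int_0^xZ^{(q)}$, which is strictly increasing on $[0,\infty)$ from $0$ to $\infty$. Let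 $R^{(q)}(z)=\overline Z^{(q)}(z)+\psi_X'(0+)/q$ and $\tilde r^{(q)}_c(z)=R^{(q)}(z)+\delta\int_c^z\mathbb W^{(q)}(z-y)Z^{(q)}(y)\,dy$. Define $\Gamma(a,b)=\delta\mathbb Z^{(q)}(a)-q\rho-q\beta\tilde r^{(q)}_{b-a}(b)$ and $\gamma(a,b)=\beta^{-1}-Z^{(q)}(b-a)$ for $0\le a\le b$. The pair $(a^*,b^* )$ is defined as follows. If $\Gamma(0,0)\le0$, then $a^*=b^*=0$. Otherwise, $b^*>0$ is the unique root of $\min_{0\le a\le b^*}\Gamma(a,b^* )=0$, and $a^*$ is the unique minimizer of $a\mapsto\Gamma(a,b^* )$ on $[0,b^*]$. In case (ii-1), $a^*=0<b^*$; in case (ii-2), $0<a^*<b^*$ and $\gamma(a^*,b^* )=\Gamma(a^*,b^* )=0$. *)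

theory Defs
  imports "HOL-Analysis.Analysis"
begin

text \<open>Spectrally positive Levy process Y with finite mean, described by its
Levy-Khintchine triple (gam, sig, Lm): Lm is a Levy measure on (0,infinity) with
int min(z^2, z) Lm(dz) < infinity (Levy condition plus finite mean), and the
Laplace exponent psi_Y(theta) = log E[exp(-theta Y_1)] is, for theta >= 0,
  gam*theta + sig^2 theta^2/2 + int (exp(-theta z) - 1 + theta z) Lm(dz).\<close>

definition fm_levy_measure :: "real measure \<Rightarrow> bool" where
  "fm_levy_measure Lm \<longleftrightarrow> sets Lm = sets borel \<and> emeasure Lm {..0} = 0 \<and>
      integrable Lm (\<lambda>z. min (z\<^sup>2) z)"

definition psiLK :: "real \<Rightarrow> real \<Rightarrow> real measure \<Rightarrow> real \<Rightarrow> real" where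
  "psiLK gam sig Lm \<theta> = gam * \<theta> + sig\<^sup>2 * \<theta>\<^sup>2 / 2
      + (\<integral>z. (exp (- \<theta> * z) - 1 + \<theta> * z) \<partial>Lm)"

text \<open>Y is a subordinator iff no Gaussian part, jumps of bounded variation
and nonnegative drift d = -(gam + int z Lm(dz)).\<close>
definition is_subordinator_LK :: "real \<Rightarrow> real \<Rightarrow> real measure \<Rightarrow> bool" where
  "is_subordinator_LK gam sig Lm \<longleftrightarrow>
     sig = 0 \<and> integrable Lm (\<lambda>z. z) \<and> gam + (\<integral>z. z \<partial>Lm) \<le> 0"

definition is_scale_function :: "(real \<Rightarrow> real) \<Rightarrow> real \<Rightarrow> (real \<Rightarrow> real) \<Rightarrow> bool" where
  "is_scale_function psi q W \<longleftrightarrow>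
     (\<forall>x<0. W x = 0) \<and> continuous_on {0..} W \<and> strict_mono_on {0..} W \<and>
     (\<exists>\<theta>0. \<forall>\<theta>>\<theta>0. ((\<lambda>x. exp (- \<theta> * x) * W x) has_integral (1 / (psi \<theta> - q))) {0..})"

definition Zfun :: "real \<Rightarrow> (real \<Rightarrow> real) \<Rightarrow> real \<Rightarrow> real" where
  "Zfun q W x = 1 + q * integral {0..x} W"

definition Zbar :: "real \<Rightarrow> (real \<Rightarrow> real) \<Rightarrow> real \<Rightarrow> real" where
  "Zbar q W x = integral {0..x} (Zfun q W)"

text \<open>R^(q)(z) = Zbar(z) + psi_X'(0+)/q, with dX = psi_X'(0+).\<close>
definition Rfun :: "real \<Rightarrow> (real \<Rightarrow> real) \<Rightarrow> real \<Rightarrow> real \<Rightarrow> real" where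
  "Rfun q W dX z = Zbar q W z + dX / q"

text \<open>tilde r^(q)_c(z); WW is the scale function of Y, W that of X.\<close>
definition rtilde :: "real \<Rightarrow> real \<Rightarrow> (real \<Rightarrow> real) \<Rightarrow> (real \<Rightarrow> real) \<Rightarrow> real \<Rightarrow> real \<Rightarrow> real \<Rightarrow> real" where
  "rtilde q \<delta> WW W dX c z = Rfun q W dX z + \<delta> * integral {c..z} (\<lambda>y. WW (z - y) * Zfun q W y)"

definition GammaF :: "real \<Rightarrow> real \<Rightarrow> real \<Rightarrow> real \<Rightarrow> (real \<Rightarrow> real) \<Rightarrow> (real \<Rightarrow> real) \<Rightarrow> real
                      \<Rightarrow> real \<Rightarrow> real \<Rightarrow> real" where
  "GammaF q \<delta> \<beta> \<rho> WW W dX a b =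
     \<delta> * Zfun q WW a - q * \<rho> - q * \<beta> * rtilde q \<delta> WW W dX (b - a) b"

end

theory Submission
  imports Defs "HOL-Real_Asymp.Real_Asymp"
begin

text \<open>
  Write \<open>WW\<close>, \<open>W\<close> for the scale functions of \<open>Y\<close>, \<open>X\<close> and \<open>zb = Z\<^sup>-\<^sup>1(1/\<beta>)\<close>. In the lower
  barrier, \<open>\<partial>\<Gamma>/\<partial>a (a, b) = q \<delta> WW(a) (1 - \<beta> Z(b - a))\<close>, whose sign changes exactly at
  \<open>a = b - zb\<close>: so \<open>a \<mapsto> \<Gamma>(a, b)\<close> strictly decreases on \<open>[0, b - zb]\<close> and strictly increases
  on \<open>[max 0 (b - zb), b]\<close>. Moreover \<open>\<Gamma>(0, b) = \<delta> - q \<rho> - \<beta> \<psi>\<^sub>X'(0+) - q \<beta> Zbar(b)\<close> strictly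
  decreases in \<open>b\<close> and vanishes at \<open>b0\<close>. Since \<open>\<Gamma>(0, b*) \<ge> \<Gamma>(a*, b*) = 0\<close>, \<open>b* \<le> b0\<close>.
  If \<open>b* \<le> zb\<close>, \<open>\<Gamma>(\<cdot>, b*)\<close> is increasing, so \<open>a* = 0\<close> and hence \<open>b* = b0\<close>. If \<open>b0 > zb\<close>,
  this forces \<open>b* > zb\<close>, and \<open>a* = 0\<close> would again give \<open>b* = b0\<close>, contradicting the decreasing
  branch at \<open>b0\<close>. In every case the increasing branch keeps \<open>a*\<close> away from \<open>b*\<close>.

  The monotonicity needs \<open>WW(0), W(0) \<ge> 0\<close>. This comes from the Laplace transform
  \<open>1/(\<psi>(\<theta>) - q)\<close>, which is positive for large \<open>\<theta>\<close> because \<open>\<psi>\<close> grows linearly when \<open>Y\<close> is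
  not a subordinator, whereas a continuous increasing function negative at \<open>0\<close> has a negative
  Laplace transform for large \<open>\<theta>\<close>.
\<close>

lemma levy_integrand_nonneg: "0 \<le> exp (- t * z) - 1 + t * (z::real)"
  using exp_ge_add_one_self[of "- t * z"] by simp

lemma exp_minus_le_quadratic:
  assumes "0 \<le> (s::real)"
  shows "exp (- s) \<le> 1 - s + s\<^sup>2 / 2"
proof -
  have pos: "0 < 1 + s + s\<^sup>2 / 2" using assms by (simp add: add_pos_nonneg)
  have "(1 + s + s\<^sup>2 / 2) * (1 - s + s\<^sup>2 / 2) = 1 + s ^ 4 / 4"
    by (simp add: algebra_simps power2_eq_square power4_eq_xxxx)
  then have "1 / (1 + s + s\<^sup>2 / 2) \<le> 1 - s + s\<^sup>2 / 2"
    using pos by (simp add: divide_le_eq mult.commute)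
  moreover have "exp (- s) \<le> 1 / (1 + s + s\<^sup>2 / 2)"
    using exp_lower_Taylor_quadratic[OF assms] pos by (simp add: exp_minus field_simps)
  ultimately show ?thesis by linarith
qed

lemma levy_integrand_le:
  assumes "0 \<le> t" "0 < z"
  shows "exp (- t * z) - 1 + t * (z::real) \<le> (t + t\<^sup>2) * min (z\<^sup>2) z"
proof (cases "z \<le> 1")
  case True
  then have "min (z\<^sup>2) z = z\<^sup>2" using assms by (simp add: power2_eq_square mult_left_le_one_le)
  moreover have "exp (- (t * z)) \<le> 1 - t * z + (t * z)\<^sup>2 / 2"
    using assms by (intro exp_minus_le_quadratic) simp
  moreover have "(t * z)\<^sup>2 / 2 \<le> (t + t\<^sup>2) * z\<^sup>2"
    using assms by (simp add: power_mult_distrib algebra_simps)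
  ultimately show ?thesis by simp
next
  case False
  then have min_eq: "min (z\<^sup>2) z = z" using assms by (simp add: power2_eq_square)
  have "exp (- t * z) \<le> 1" using assms by simp
  then have "exp (- t * z) - 1 + t * z \<le> t * z" by linarith
  also have "\<dots> \<le> (t + t\<^sup>2) * z" using assms by (simp add: algebra_simps)
  finally show ?thesis unfolding min_eq .
qed

lemma fm_levy_measure_sets: "fm_levy_measure Lm \<Longrightarrow> sets Lm = sets borel"
  by (simp add: fm_levy_measure_def)

lemma fm_levy_measure_AE_pos:
  assumes "fm_levy_measure Lm"
  shows "AE z in Lm. 0 < (z::real)"
proof (rule AE_I')
  show "{..0::real} \<in> null_sets Lm"
    using assms by (simp add: fm_levy_measure_def null_sets_def)
qed auto

lemma integrable_levy_integrand:
  assumes levy: "fm_levy_measure Lm" and t: "0 \<le> t"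
  shows "integrable Lm (\<lambda>z. exp (- t * z) - 1 + t * z)"
proof (rule Bochner_Integration.integrable_bound)
  show "integrable Lm (\<lambda>z. (t + t\<^sup>2) * min (z\<^sup>2) z)"
    using levy by (simp add: fm_levy_measure_def)
  show "(\<lambda>z. exp (- t * z) - 1 + t * z) \<in> borel_measurable Lm"
    by (subst measurable_cong_sets[OF fm_levy_measure_sets[OF levy] refl]) measurable
  show "AE z in Lm. norm (exp (- t * z) - 1 + t * z) \<le> norm ((t + t\<^sup>2) * min (z\<^sup>2) z)"
    using fm_levy_measure_AE_pos[OF levy]
  proof eventually_elim
    case (elim z)
    then show ?case
      using levy_integrand_nonneg[of t z] levy_integrand_le[OF t elim] t by simp
  qed
qed

lemma nn_integral_id_le_liminf:
  assumes levy: "fm_levy_measure Lm"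
  shows "(\<integral>\<^sup>+z. ennreal z \<partial>Lm)
    \<le> liminf (\<lambda>n. ennreal ((\<integral>z. exp (- real n * z) - 1 + real n * z \<partial>Lm) / real n))"
proof -
  define u where "u n z = ennreal ((exp (- real n * z) - 1 + real n * z) / real n)" for n z
  have "AE z in Lm. ennreal z \<le> liminf (\<lambda>n. u n z)"
    using fm_levy_measure_AE_pos[OF levy]
  proof eventually_elim
    case (elim z)
    have "((\<lambda>n. (exp (- real n * z) - 1 + real n * z) / real n) \<longlongrightarrow> z) sequentially"
      using elim by real_asymp
    then have "((\<lambda>n. u n z) \<longlongrightarrow> ennreal z) sequentially"
      unfolding u_def by (rule tendsto_ennrealI)
    then show ?case by (simp add: lim_imp_Liminf)
  qed
  then have "(\<integral>\<^sup>+z. ennreal z \<partial>Lm) \<le> (\<integral>\<^sup>+z. liminf (\<lambda>n. u n z) \<partial>Lm)"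
    by (rule nn_integral_mono_AE)
  also have "\<dots> \<le> liminf (\<lambda>n. integral\<^sup>N Lm (u n))"
  proof (rule nn_integral_liminf)
    show "u n \<in> borel_measurable Lm" for n
      unfolding u_def by (subst measurable_cong_sets[OF fm_levy_measure_sets[OF levy] refl]) measurable
  qed
  also have "(\<lambda>n. integral\<^sup>N Lm (u n))
      = (\<lambda>n. ennreal ((\<integral>z. exp (- real n * z) - 1 + real n * z \<partial>Lm) / real n))"
  proof
    fix n
    have "integral\<^sup>N Lm (u n)
        = ennreal (\<integral>z. (exp (- real n * z) - 1 + real n * z) / real n \<partial>Lm)"
      unfolding u_def
    proof (rule nn_integral_eq_integral)
      show "integrable Lm (\<lambda>z. (exp (- real n * z) - 1 + real n * z) / real n)"
        using integrable_levy_integrand[OF levy of_nat_0_le_iff] by (rule integrable_divide_zero)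
      show "AE z in Lm. 0 \<le> (exp (- real n * z) - 1 + real n * z) / real n"
        using levy_integrand_nonneg by (intro AE_I2 divide_nonneg_nonneg) auto
    qed
    then show "integral\<^sup>N Lm (u n)
        = ennreal ((\<integral>z. exp (- real n * z) - 1 + real n * z \<partial>Lm) / real n)"
      by simp
  qed
  finally show ?thesis .
qed

lemma not_subordinator_nn_integral_id_gt:
  assumes levy: "fm_levy_measure Lm" and not_sub: "\<not> is_subordinator_LK gam 0 Lm"
    and gam: "gam \<le> 0"
  shows "ennreal (- gam) < (\<integral>\<^sup>+z. ennreal z \<partial>Lm)"
proof -
  have AE_nonneg: "AE z in Lm. 0 \<le> (z::real)"
    using fm_levy_measure_AE_pos[OF levy] by eventually_elim simp
  show ?thesis
  proof (cases "integrable Lm (\<lambda>z. z)")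
    case True
    then have "(\<integral>\<^sup>+z. ennreal z \<partial>Lm) = ennreal (\<integral>z. z \<partial>Lm)"
      using AE_nonneg by (rule nn_integral_eq_integral)
    moreover have "- gam < (\<integral>z. z \<partial>Lm)"
      using not_sub True by (auto simp: is_subordinator_LK_def)
    ultimately show ?thesis using gam by (simp add: ennreal_less_iff)
  next
    case False
    have "(\<integral>\<^sup>+z. ennreal z \<partial>Lm) = \<infinity>"
    proof (rule ccontr)
      assume "(\<integral>\<^sup>+z. ennreal z \<partial>Lm) \<noteq> \<infinity>"
      then have fin: "(\<integral>\<^sup>+z. ennreal z \<partial>Lm) = ennreal (enn2real (\<integral>\<^sup>+z. ennreal z \<partial>Lm))"
        by (simp add: less_top)
      have "(\<lambda>z. z) \<in> borel_measurable Lm"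
        by (subst measurable_cong_sets[OF fm_levy_measure_sets[OF levy] refl]) simp
      then have "integrable Lm (\<lambda>z. z)"
        using AE_nonneg fin by (rule integrableI_nn_integral_finite)
      then show False using False by simp
    qed
    then show ?thesis by simp
  qed
qed

lemma psiLK_superlinear:
  assumes levy: "fm_levy_measure Lm" and not_sub: "\<not> is_subordinator_LK gam sig Lm"
  shows "\<exists>c>0. eventually (\<lambda>n. c * real n \<le> psiLK gam sig Lm (real n)) sequentially"
proof -
  define J where "J t = (\<integral>z. exp (- t * z) - 1 + t * z \<partial>Lm)" for t
  have psi: "psiLK gam sig Lm t = gam * t + sig\<^sup>2 * t\<^sup>2 / 2 + J t" for t
    by (simp add: psiLK_def J_def)
  have J_nonneg: "0 \<le> J t" for t
    unfolding J_def by (rule Bochner_Integration.integral_nonneg) (rule levy_integrand_nonneg)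
  consider "sig \<noteq> 0" | "sig = 0" "0 < gam" | "sig = 0" "gam \<le> 0" by linarith
  then show ?thesis
  proof cases
    case 1
    then have s2: "0 < sig\<^sup>2" by simp
    have "eventually (\<lambda>n. 1 * real n \<le> psiLK gam sig Lm (real n)) sequentially"
      using eventually_ge_at_top[of "nat \<lceil>2 * (1 - gam) / sig\<^sup>2\<rceil>"]
    proof eventually_elim
      case (elim n)
      then have "2 * (1 - gam) \<le> real n * sig\<^sup>2"
        using s2 by (simp add: pos_divide_le_eq)
      then have "1 \<le> sig\<^sup>2 * real n / 2 + gam"
        by (simp add: field_simps mult.commute)
      then have "real n * 1 \<le> real n * (sig\<^sup>2 * real n / 2 + gam)"
        by (intro mult_left_mono) auto
      then show ?case
        using psi[of "real n"] J_nonneg[of "real n"] by (simp add: algebra_simps power2_eq_square)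
    qed
    then show ?thesis by (intro exI[of _ 1]) simp
  next
    case 2
    then show ?thesis using psi J_nonneg by (intro exI[of _ gam]) simp
  next
    case 3
    have "ennreal (- gam) < (\<integral>\<^sup>+z. ennreal z \<partial>Lm)"
      using not_subordinator_nn_integral_id_gt[OF levy] not_sub 3 by simp
    then obtain x where x: "ennreal (- gam) < x" "x < (\<integral>\<^sup>+z. ennreal z \<partial>Lm)"
      using dense by blast
    define r where "r = enn2real x"
    have "x < top" using x(2) by (rule order.strict_trans2) simp
    then have x_eq: "x = ennreal r" by (cases x) (auto simp: r_def)
    have r_nonneg: "0 \<le> r" by (simp add: r_def)
    have r_pos: "0 < gam + r" using x(1) 3 r_nonneg by (simp add: x_eq ennreal_less_iff)
    have "ennreal r < liminf (\<lambda>n. ennreal (J (real n) / real n))"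
      using order.strict_trans2[OF x(2)[unfolded x_eq] nn_integral_id_le_liminf[OF levy]]
      by (simp only: J_def)
    then have "eventually (\<lambda>n. ennreal r < ennreal (J (real n) / real n)) sequentially"
      by (rule less_LiminfD)
    then have "eventually (\<lambda>n. ennreal r < ennreal (J (real n) / real n) \<and> 1 \<le> n) sequentially"
      using eventually_ge_at_top by (rule eventually_conj)
    then have "eventually (\<lambda>n. (gam + r) * real n \<le> psiLK gam sig Lm (real n)) sequentially"
    proof eventually_elim
      case (elim n)
      then have "0 < real n" "r < J (real n) / real n"
        using r_nonneg by (simp_all add: ennreal_less_iff)
      then have "r * real n < J (real n)" by (simp add: pos_less_divide_eq)
      then show ?case using psi[of "real n"] 3 by (simp add: algebra_simps)
    qed
    then show ?thesis using r_pos by blast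
  qed
qed

lemma psiLK_tendsto_at_top:
  assumes "fm_levy_measure Lm" and "\<not> is_subordinator_LK gam sig Lm"
  shows "filterlim (\<lambda>n. psiLK gam sig Lm (real n)) at_top sequentially"
proof -
  obtain c where c: "0 < c"
    and ev: "eventually (\<lambda>n. c * real n \<le> psiLK gam sig Lm (real n)) sequentially"
    using psiLK_superlinear[OF assms] by blast
  have "filterlim (\<lambda>n. c * real n) at_top sequentially"
    using c filterlim_real_sequentially by (rule filterlim_tendsto_pos_mult_at_top[OF tendsto_const])
  then show ?thesis using ev by (rule filterlim_at_top_mono)
qed

lemma exp_weighted_split_le:
  fixes x t t1 c w v :: real
  assumes x: "0 \<le> x" and t: "t1 \<le> t" and c: "0 < c" and w: "w < 0" "w \<le> v"
    and near: "x \<le> c \<Longrightarrow> v \<le> w / 2"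
  shows "exp (- t * x) * v
    \<le> w / 2 * exp (- t * x) + exp (- (t - t1) * c) * (exp (- t1 * x) * v - w * exp (- t1 * x))"
proof (cases "x \<le> c")
  case True
  have "exp (- t * x) * v \<le> w / 2 * exp (- t * x)"
    using mult_left_mono[OF near[OF True], of "exp (- t * x)"] by (simp add: mult.commute)
  moreover have "0 \<le> exp (- (t - t1) * c) * (exp (- t1 * x) * (v - w))"
    using w by simp
  moreover have "exp (- (t - t1) * c) * (exp (- t1 * x) * v - w * exp (- t1 * x))
      = exp (- (t - t1) * c) * (exp (- t1 * x) * (v - w))"
    by (simp add: algebra_simps)
  ultimately show ?thesis by (metis add_increasing2)
next
  case False
  have "exp (- t * x) * (v - w / 2) \<le> exp (- (t - t1) * c) * (exp (- t1 * x) * (v - w))"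
  proof (cases "v - w / 2 \<le> 0")
    case True
    then show ?thesis using w by (simp add: mult_nonneg_nonpos order.trans[of _ 0])
  next
    case pos: False
    have "(t - t1) * c \<le> (t - t1) * x" using False t by (intro mult_left_mono) auto
    then have "exp (- t * x) \<le> exp (- (t - t1) * c) * exp (- t1 * x)"
      by (simp add: algebra_simps flip: exp_add)
    then have "exp (- t * x) * (v - w / 2) \<le> exp (- (t - t1) * c) * exp (- t1 * x) * (v - w / 2)"
      using pos by (intro mult_right_mono) auto
    also have "\<dots> \<le> exp (- (t - t1) * c) * exp (- t1 * x) * (v - w)"
      using w by (intro mult_left_mono) auto
    finally show ?thesis by (simp add: mult.assoc)
  qed
  then show ?thesis by (simp add: algebra_simps)
qed

text \<open>On \<open>[0, c]\<close> the integrand is at most \<open>w/2 \<cdot> exp(-t x)\<close>; beyond \<open>c\<close>,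
  \<open>exp(-t x) \<le> exp(-(t - t1) c) \<cdot> exp(-t1 x)\<close>, so that part is controlled by the transform at \<open>t1\<close>.\<close>
lemma Laplace_transform_split_le:
  fixes W L :: "real \<Rightarrow> real"
  assumes L: "\<And>t. t0 < t \<Longrightarrow> ((\<lambda>x. exp (- t * x) * W x) has_integral L t) {0..}"
    and c: "0 < c" and w: "w < 0" and above: "\<And>x. 0 \<le> x \<Longrightarrow> w \<le> W x"
    and near: "\<And>x. 0 \<le> x \<Longrightarrow> x \<le> c \<Longrightarrow> W x \<le> w / 2"
    and t1: "t0 < t1" "0 < t1" and t: "t1 \<le> t"
  shows "L t \<le> w / 2 / t + exp (- (t - t1) * c) * (L t1 - w / t1)"
proof -
  have exp_int: "((\<lambda>x. exp (- t * x)) has_integral 1 / t) {0..}" if "0 < t" for t :: real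
    using has_integral_exp_minus_to_infinity[OF that, of 0] by simp
  have "((\<lambda>x. w / 2 * exp (- t * x) + exp (- (t - t1) * c) * (exp (- t1 * x) * W x - w * exp (- t1 * x)))
      has_integral (w / 2 * (1 / t) + exp (- (t - t1) * c) * (L t1 - w * (1 / t1)))) {0..}"
    using t t1 by (intro has_integral_add has_integral_mult_right has_integral_diff L exp_int) auto
  moreover have "exp (- t * x) * W x \<le> w / 2 * exp (- t * x)
      + exp (- (t - t1) * c) * (exp (- t1 * x) * W x - w * exp (- t1 * x))" if "x \<in> {0..}" for x
    using that w above near by (intro exp_weighted_split_le[OF _ t c]) auto
  ultimately have "L t \<le> w / 2 * (1 / t) + exp (- (t - t1) * c) * (L t1 - w * (1 / t1))"
    using t t1 by (intro has_integral_le[OF L]) auto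
  then show ?thesis by simp
qed

lemma Laplace_transform_eventually_neg:
  fixes W L :: "real \<Rightarrow> real"
  assumes cont: "continuous_on {0..} W" and mono: "mono_on {0..} W" and neg: "W 0 < 0"
    and L: "\<And>t. t0 < t \<Longrightarrow> ((\<lambda>x. exp (- t * x) * W x) has_integral L t) {0..}"
  shows "eventually (\<lambda>t. L t < 0) at_top"
proof -
  define w where "w = W 0"
  have "(W \<longlongrightarrow> w) (at 0 within {0..})"
    using cont unfolding w_def continuous_on_def by simp
  then have "eventually (\<lambda>x. W x < w / 2) (at 0 within {0..})"
    using neg by (intro order_tendstoD) (auto simp: w_def)
  then obtain d where d: "0 < d" "\<And>x. x \<in> {0..} \<Longrightarrow> x \<noteq> 0 \<Longrightarrow> dist x 0 < d \<Longrightarrow> W x < w / 2"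
    by (auto simp: eventually_at)
  define c where "c = d / 2"
  have c: "0 < c" using d by (simp add: c_def)
  have near: "W x \<le> w / 2" if "0 \<le> x" "x \<le> c" for x
    using d(2)[of x] that neg d(1) by (cases "x = 0") (auto simp: c_def w_def)
  have above: "w \<le> W x" if "0 \<le> x" for x
    using mono that unfolding w_def by (auto dest: mono_onD)
  define t1 where "t1 = max t0 0 + 1"
  have t1: "t0 < t1" "0 < t1" by (auto simp: t1_def)
  define M where "M = L t1 - w / t1"
  have "((\<lambda>t. t * exp (- (t - t1) * c) * \<bar>M\<bar>) \<longlongrightarrow> 0 * \<bar>M\<bar>) at_top"
    using c by (intro tendsto_mult tendsto_const) real_asymp
  then have "eventually (\<lambda>t. t * exp (- (t - t1) * c) * \<bar>M\<bar> < - w / 2) at_top"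
    using neg by (intro order_tendstoD) (auto simp: w_def)
  then show ?thesis
    using eventually_ge_at_top[of t1]
  proof eventually_elim
    case (elim t)
    have pos: "0 < t" using elim t1 by simp
    have "L t \<le> w / 2 / t + exp (- (t - t1) * c) * M"
      unfolding M_def using neg above near
      by (intro Laplace_transform_split_le[OF L c _ _ _ t1 elim(2)]) (auto simp: w_def)
    then have "t * L t \<le> w / 2 + t * (exp (- (t - t1) * c) * M)"
      using mult_left_mono[of _ _ t] pos by (fastforce simp: algebra_simps)
    also have "t * (exp (- (t - t1) * c) * M) \<le> t * exp (- (t - t1) * c) * \<bar>M\<bar>"
      using pos by (simp add: mult.assoc mult_left_mono)
    finally have "t * L t < 0" using elim(1) by simp
    then show ?case using pos by (simp add: mult_less_0_iff)
  qed
qed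

lemma scale_function_continuous_on: "is_scale_function psi q W \<Longrightarrow> continuous_on {0..} W"
  by (simp add: is_scale_function_def)

lemma scale_function_strict_mono_on: "is_scale_function psi q W \<Longrightarrow> strict_mono_on {0..} W"
  by (simp add: is_scale_function_def)

lemma scale_function_nonneg_0:
  assumes scale: "is_scale_function psi q W"
    and psi: "filterlim (\<lambda>n. psi (real n)) at_top sequentially"
  shows "0 \<le> W 0"
proof (rule ccontr)
  assume "\<not> 0 \<le> W 0"
  obtain t0 where L: "\<And>t. t0 < t \<Longrightarrow> ((\<lambda>x. exp (- t * x) * W x) has_integral 1 / (psi t - q)) {0..}"
    using scale unfolding is_scale_function_def by blast
  have "eventually (\<lambda>t. 1 / (psi t - q) < 0) at_top"
  proof (rule Laplace_transform_eventually_neg[OF _ _ _ L])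
    show "continuous_on {0..} W" by (rule scale_function_continuous_on[OF scale])
    show "mono_on {0..} W"
      by (rule strict_mono_on_imp_mono_on[OF scale_function_strict_mono_on[OF scale]])
    show "W 0 < 0" using \<open>\<not> 0 \<le> W 0\<close> by simp
  qed
  then have "eventually (\<lambda>n. 1 / (psi (real n) - q) < 0) sequentially"
    by (rule filterlim_iff[THEN iffD1, rule_format, OF filterlim_real_sequentially])
  moreover have "eventually (\<lambda>n. q < psi (real n)) sequentially"
    using psi by (rule filterlim_at_top_dense[THEN iffD1, rule_format])
  ultimately have "eventually (\<lambda>n. False) sequentially"
    by eventually_elim simp
  then show False by simp
qed

lemma integral_pos_continuous:
  fixes f :: "real \<Rightarrow> real"
  assumes cont: "continuous_on {s..t} f" and nonneg: "\<And>x. x \<in> {s..t} \<Longrightarrow> 0 \<le> f x"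
    and m: "m \<in> {s..t}" "0 < f m" and st: "s < t"
  shows "0 < integral {s..t} f"
proof -
  have int: "(f has_integral integral {s..t} f) {s..t}"
    using cont by (intro integrable_integral integrable_continuous_real)
  have "integral {s..t} f \<noteq> 0"
  proof
    assume "integral {s..t} f = 0"
    then have "f m = 0"
    proof (intro has_integral_0_cbox_imp_0[of s t f m])
      show "(f has_integral 0) (cbox s t)" using int \<open>integral {s..t} f = 0\<close> by simp
    qed (use cont nonneg m st in auto)
    with m show False by simp
  qed
  moreover have "0 \<le> integral {s..t} f"
    using int nonneg by (intro integral_nonneg) (auto simp: has_integral_integrable)
  ultimately show ?thesis by simp
qed

lemma strict_mono_on_integral:
  fixes f :: "real \<Rightarrow> real"
  assumes cont: "\<And>b. continuous_on {0..b} f"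
    and nonneg: "\<And>x. 0 \<le> x \<Longrightarrow> 0 \<le> f x" and pos: "\<And>x. 0 < x \<Longrightarrow> 0 < f x"
  shows "strict_mono_on {0..} (\<lambda>x. integral {0..x} f)"
proof (rule strict_mono_onI)
  fix x y :: real assume "x \<in> {0..}" "x < y"
  then have xy: "0 \<le> x" "x < y" by auto
  have "integral {0..x} f + integral {x..y} f = integral {0..y} f"
    using xy cont by (intro Henstock_Kurzweil_Integration.integral_combine integrable_continuous_real) auto
  moreover have "0 < integral {x..y} f"
  proof (rule integral_pos_continuous[where m = y])
    show "continuous_on {x..y} f"
      using cont[of y] by (rule continuous_on_subset) (use xy in auto)
  qed (use xy nonneg pos[of y] in auto)
  ultimately show "integral {0..x} f < integral {0..y} f" by simp
qed

lemma continuous_on_Zfun: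
  assumes "continuous_on {0..} W"
  shows "continuous_on {0..b} (Zfun q W)"
proof -
  have "continuous_on {0..b} (\<lambda>x. integral {0..x} W)"
    using assms by (intro indefinite_integral_continuous_1 integrable_continuous_real)
      (auto elim: continuous_on_subset)
  then show ?thesis unfolding Zfun_def by (intro continuous_intros)
qed

lemma Zfun_0 [simp]: "Zfun q W 0 = 1"
  by (simp add: Zfun_def)

lemma strict_mono_on_pos:
  fixes W :: "real \<Rightarrow> real"
  assumes "strict_mono_on {0..} W" "0 \<le> W 0" "0 < x"
  shows "0 < W x"
  using strict_mono_onD[OF assms(1), of 0 x] assms(2,3) by simp

lemma strict_mono_on_nonneg:
  fixes W :: "real \<Rightarrow> real"
  assumes "strict_mono_on {0..} W" "0 \<le> W 0" "0 \<le> x"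
  shows "0 \<le> W x"
  using strict_mono_on_pos[OF assms(1,2), of x] assms(2,3) by (cases "x = 0") auto

context
  fixes q :: real and W :: "real \<Rightarrow> real"
  assumes q: "0 < q" and cont: "continuous_on {0..} W"
    and mono: "strict_mono_on {0..} W" and W_0: "0 \<le> W 0"
begin

lemma Zfun_strict_mono_on: "strict_mono_on {0..} (Zfun q W)"
proof -
  have "strict_mono_on {0..} (\<lambda>x. integral {0..x} W)"
    using continuous_on_subset[OF cont] strict_mono_on_nonneg[OF mono W_0]
      strict_mono_on_pos[OF mono W_0]
    by (intro strict_mono_on_integral) auto
  then show ?thesis
    using q by (auto simp: Zfun_def strict_mono_on_def)
qed

lemma Zfun_ge_1: "0 \<le> x \<Longrightarrow> 1 \<le> Zfun q W x"
  using strict_mono_onD[OF Zfun_strict_mono_on, of 0 x] by (cases "x = 0") auto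

lemma Zbar_strict_mono_on: "strict_mono_on {0..} (Zbar q W)"
  unfolding Zbar_def
proof (rule strict_mono_on_integral)
  show "0 < Zfun q W x" if "0 < x" for x
    using Zfun_ge_1[of x] that by simp
  show "0 \<le> Zfun q W x" if "0 \<le> x" for x
    using Zfun_ge_1[OF that] by simp
qed (rule continuous_on_Zfun[OF cont])

end

lemma integral_reflect_shift:
  fixes f :: "real \<Rightarrow> 'a::real_normed_vector"
  shows "integral {b - a..b} (\<lambda>y. f (b - y)) = integral {0..a} f"
proof -
  have "integral {b - a..b} (\<lambda>y. f (b - y)) = integral {(b - a) - b..b - b} (\<lambda>x. f (b - (x + b)))"
    using integral_shift_real_ivl[where f = "\<lambda>y. f (b - y)" and c = b, of "b - a" b] by simp
  also have "\<dots> = integral {- a..- 0} (\<lambda>x. f (- x))" by simp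
  also have "\<dots> = integral {0..a} f" by (rule Henstock_Kurzweil_Integration.integral_reflect_real)
  finally show ?thesis .
qed

locale Gamma_setting =
  fixes q \<delta> \<beta> \<rho> dX zb :: real and WW W :: "real \<Rightarrow> real"
  assumes q_pos: "0 < q" and delta_pos: "0 < \<delta>" and beta_pos: "0 < \<beta>" and beta_lt_1: "\<beta> < 1"
    and cont_WW: "continuous_on {0..} WW" and mono_WW: "strict_mono_on {0..} WW"
    and WW_0: "0 \<le> WW 0"
    and cont_W: "continuous_on {0..} W" and mono_W: "strict_mono_on {0..} W" and W_0: "0 \<le> W 0"
    and zb: "0 \<le> zb" "Zfun q W zb = 1 / \<beta>"
begin

abbreviation G :: "real \<Rightarrow> real \<Rightarrow> real" where
  "G \<equiv> GammaF q \<delta> \<beta> \<rho> WW W dX"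

text \<open>\<open>\<partial>\<Gamma>/\<partial>a (a, b) = q \<delta> Gamma_rate b a = q \<delta> \<beta> WW(a) \<gamma>(a, b)\<close>.\<close>
definition Gamma_rate :: "real \<Rightarrow> real \<Rightarrow> real" where
  "Gamma_rate b s = WW s * (1 - \<beta> * Zfun q W (b - s))"

lemma zb_pos: "0 < zb"
  using zb beta_pos beta_lt_1 by (cases "zb = 0") auto

lemma beta_Zfun_less_1:
  assumes "0 \<le> y" "y < zb"
  shows "\<beta> * Zfun q W y < 1"
  using strict_mono_onD[OF Zfun_strict_mono_on[OF q_pos cont_W mono_W W_0], of y zb] assms zb beta_pos
  by (simp add: less_divide_eq mult.commute)

lemma beta_Zfun_greater_1:
  assumes "zb < y"
  shows "1 < \<beta> * Zfun q W y"
  using strict_mono_onD[OF Zfun_strict_mono_on[OF q_pos cont_W mono_W W_0], of zb y] assms zb beta_pos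
  by (simp add: field_simps)

lemma Gamma_0_left: "G 0 b = \<delta> - q * \<rho> - \<beta> * dX - q * \<beta> * Zbar q W b"
  using q_pos by (simp add: GammaF_def rtilde_def Rfun_def algebra_simps)

lemma continuous_on_Gamma_rate:
  assumes "0 \<le> b"
  shows "continuous_on {0..b} (Gamma_rate b)"
proof -
  have "continuous_on {0..b} (\<lambda>s. Zfun q W (b - s))"
    using assms by (intro continuous_on_compose2[OF continuous_on_Zfun[OF cont_W, of b]] continuous_intros) auto
  moreover have "continuous_on {0..b} WW" using cont_WW by (rule continuous_on_subset) auto
  ultimately show ?thesis unfolding Gamma_rate_def by (intro continuous_intros)
qed

lemma Gamma_eq_integral:
  assumes a: "0 \<le> a" "a \<le> b"
  shows "G a b = G 0 b + q * \<delta> * integral {0..a} (Gamma_rate b)"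
proof -
  let ?Zb = "\<lambda>s. Zfun q W (b - s)"
  have cont_Zb: "continuous_on {0..a} ?Zb"
    using a by (intro continuous_on_compose2[OF continuous_on_Zfun[OF cont_W, of b]] continuous_intros) auto
  have cont: "continuous_on {0..a} WW" using cont_WW by (rule continuous_on_subset) auto
  have reflect: "integral {b - a..b} (\<lambda>y. WW (b - y) * Zfun q W y) = integral {0..a} (\<lambda>s. WW s * ?Zb s)"
    using integral_reflect_shift[of b a "\<lambda>s. WW s * ?Zb s"] by simp
  have "integral {0..a} (Gamma_rate b) = integral {0..a} WW - \<beta> * integral {0..a} (\<lambda>s. WW s * ?Zb s)"
    unfolding Gamma_rate_def right_diff_distrib mult_1_right mult.left_commute[of _ \<beta>]
    using cont cont_Zb by (simp add: integral_diff integrable_continuous_real continuous_intros)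
  then have WW_eq: "integral {0..a} WW = integral {0..a} (Gamma_rate b) + \<beta> * integral {0..a} (\<lambda>s. WW s * ?Zb s)"
    by simp
  show ?thesis
    unfolding GammaF_def rtilde_def Zfun_def[of q WW] reflect WW_eq by (simp add: algebra_simps)
qed

lemma Gamma_diff_integral:
  assumes "0 \<le> a'" "a' \<le> a" "a \<le> b"
  shows "G a b - G a' b = q * \<delta> * integral {a'..a} (Gamma_rate b)"
proof -
  have combine: "integral {0..a'} (Gamma_rate b) + integral {a'..a} (Gamma_rate b) = integral {0..a} (Gamma_rate b)"
    using assms continuous_on_Gamma_rate[of b]
    by (intro Henstock_Kurzweil_Integration.integral_combine integrable_continuous_real)
      (auto elim: continuous_on_subset)
  then show ?thesis
    using Gamma_eq_integral[of a b] Gamma_eq_integral[of a' b] assms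
    by (simp flip: combine add: distrib_left)
qed

lemma Gamma_strict_mono_on: "strict_mono_on {max 0 (b - zb)..b} (\<lambda>a. G a b)"
proof (rule strict_mono_onI)
  fix a' a assume a': "a' \<in> {max 0 (b - zb)..b}" and a: "a \<in> {max 0 (b - zb)..b}" and "a' < a"
  have rate_nonneg: "0 \<le> Gamma_rate b s" if "s \<in> {a'..a}" for s
  proof -
    have "\<beta> * Zfun q W (b - s) \<le> 1"
    proof (cases "b - s < zb")
      case True then show ?thesis using that a beta_Zfun_less_1[of "b - s"] by auto
    next
      case False then have "b - s = zb" using that a' by auto
      then show ?thesis using zb beta_pos by simp
    qed
    then show ?thesis
      unfolding Gamma_rate_def using that a' by (simp add: strict_mono_on_nonneg[OF mono_WW WW_0])
  qed
  have "0 < Gamma_rate b a"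
    unfolding Gamma_rate_def using a a' \<open>a' < a\<close> beta_Zfun_less_1[of "b - a"]
    by (simp add: strict_mono_on_pos[OF mono_WW WW_0])
  moreover have "continuous_on {a'..a} (Gamma_rate b)"
    using continuous_on_Gamma_rate[of b] by (rule continuous_on_subset) (use a a' in auto)
  ultimately have "0 < integral {a'..a} (Gamma_rate b)"
    using rate_nonneg \<open>a' < a\<close> by (intro integral_pos_continuous[where m = a]) auto
  then have "0 < q * \<delta> * integral {a'..a} (Gamma_rate b)" using q_pos delta_pos by simp
  then show "G a' b < G a b"
    using Gamma_diff_integral[of a' a b] a a' \<open>a' < a\<close> by simp
qed

lemma Gamma_strict_antimono_on: "strict_antimono_on {0..b - zb} (\<lambda>a. G a b)"
proof (rule monotone_onI)
  fix a' a assume a': "a' \<in> {0..b - zb}" and a: "a \<in> {0..b - zb}" and "a' < a"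
  have rate_nonpos: "Gamma_rate b s \<le> 0" if "s \<in> {a'..a}" for s
  proof -
    have "1 \<le> \<beta> * Zfun q W (b - s)"
    proof (cases "zb < b - s")
      case True then show ?thesis using beta_Zfun_greater_1[of "b - s"] by simp
    next
      case False then have "b - s = zb" using that a by auto
      then show ?thesis using zb beta_pos by simp
    qed
    then show ?thesis
      unfolding Gamma_rate_def using that a'
      by (simp add: mult_nonneg_nonpos strict_mono_on_nonneg[OF mono_WW WW_0])
  qed
  define m where "m = (a' + a) / 2"
  have "a' < m" "m < a" unfolding m_def using \<open>a' < a\<close> by auto
  then have m: "m \<in> {a'..a}" "0 < m" "zb < b - m" using a a' by auto
  have "Gamma_rate b m < 0"
    unfolding Gamma_rate_def using m beta_Zfun_greater_1[of "b - m"]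
    by (simp add: mult_pos_neg strict_mono_on_pos[OF mono_WW WW_0])
  moreover have "continuous_on {a'..a} (Gamma_rate b)"
    using continuous_on_Gamma_rate[of b] by (rule continuous_on_subset) (use a a' zb in auto)
  ultimately have "0 < integral {a'..a} (\<lambda>s. - Gamma_rate b s)"
    using rate_nonpos m \<open>a' < a\<close>
    by (intro integral_pos_continuous[where m = m] continuous_intros) auto
  then have "q * \<delta> * integral {a'..a} (Gamma_rate b) < 0"
    using q_pos delta_pos by (simp add: mult_pos_neg)
  then show "G a b < G a' b"
    using Gamma_diff_integral[of a' a b] a a' \<open>a' < a\<close> zb by simp
qed

lemma Gamma_0_left_strict_antimono_on: "strict_antimono_on {0..} (\<lambda>b. G 0 b)"
  using strict_mono_onD[OF Zbar_strict_mono_on[OF q_pos cont_W mono_W W_0]] q_pos beta_pos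
  by (intro monotone_onI) (simp add: Gamma_0_left)

lemma Gamma_0_left_root:
  assumes Gam00: "0 < G 0 0" and b0: "0 \<le> b0" "Zbar q W b0 = (\<delta> - q * \<rho>) / (q * \<beta>) - dX / q"
  shows "0 < b0" "G 0 b0 = 0"
proof -
  have "q * \<beta> * Zbar q W b0 = q * \<beta> * ((\<delta> - q * \<rho>) / (q * \<beta>) - dX / q)"
    using b0(2) by simp
  also have "\<dots> = \<delta> - q * \<rho> - \<beta> * dX"
    using q_pos beta_pos by (simp add: field_simps)
  finally show "G 0 b0 = 0" by (simp add: Gamma_0_left)
  then show "0 < b0" using Gam00 b0(1) by (cases "b0 = 0") auto
qed

end

locale Gamma_minimiser = Gamma_setting +
  fixes b0 astar bstar :: real
  assumes b0: "0 \<le> b0" "G 0 b0 = 0"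
    and bstar_pos: "0 < bstar" and astar: "astar \<in> {0..bstar}"
    and astar_min: "\<forall>a\<in>{0..bstar}. G astar bstar \<le> G a bstar"
    and min_zero: "G astar bstar = 0"
begin

lemma Gamma_0_left_eq_0_iff:
  assumes "0 \<le> b"
  shows "G 0 b = 0 \<longleftrightarrow> b = b0"
  using monotone_onD[OF Gamma_0_left_strict_antimono_on, of b b0]
    monotone_onD[OF Gamma_0_left_strict_antimono_on, of b0 b] assms b0
  by (cases b b0 rule: linorder_cases) auto

lemma bstar_eq_b0_if_astar_eq_0: "astar = 0 \<Longrightarrow> bstar = b0"
  using Gamma_0_left_eq_0_iff[of bstar] min_zero bstar_pos by simp

lemma bstar_le_b0: "bstar \<le> b0"
proof (rule ccontr)
  assume "\<not> bstar \<le> b0"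
  then have "G 0 bstar < G 0 b0"
    using monotone_onD[OF Gamma_0_left_strict_antimono_on, of b0 bstar] b0 by auto
  moreover have "G astar bstar \<le> G 0 bstar" using astar_min bstar_pos by auto
  ultimately show False using b0 min_zero by simp
qed

lemma astar_eq_0_if_bstar_le_zb:
  assumes "bstar \<le> zb"
  shows "astar = 0"
proof (rule ccontr)
  assume "astar \<noteq> 0"
  have "strict_mono_on {0..bstar} (\<lambda>a. G a bstar)"
    using Gamma_strict_mono_on[of bstar] assms by (simp add: max_absorb1)
  then have "G 0 bstar < G astar bstar"
    using strict_mono_onD[of "{0..bstar}" _ 0 astar] astar \<open>astar \<noteq> 0\<close> by auto
  moreover have "G astar bstar \<le> G 0 bstar" using astar_min bstar_pos by auto
  ultimately show False by simp
qed

lemma astar_less_bstar: "astar < bstar"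
proof (rule ccontr)
  assume "\<not> astar < bstar"
  then have "astar = bstar" using astar by simp
  define c where "c = max 0 (bstar - zb)"
  have c: "c \<in> {max 0 (bstar - zb)..bstar}" "c < bstar" using bstar_pos zb_pos by (auto simp: c_def)
  then have "G c bstar < G astar bstar"
    using strict_mono_onD[OF Gamma_strict_mono_on, of c bstar] \<open>astar = bstar\<close> bstar_pos by auto
  moreover have "G astar bstar \<le> G c bstar" using astar_min c by (auto simp: c_def)
  ultimately show False by simp
qed

lemma astar_pos_if_zb_less_b0:
  assumes "zb < b0"
  shows "0 < astar"
proof (rule ccontr)
  assume "\<not> 0 < astar"
  then have "astar = 0" using astar by simp
  then have "bstar = b0" by (rule bstar_eq_b0_if_astar_eq_0)
  then have "G (b0 - zb) b0 < G 0 b0"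
    using monotone_onD[OF Gamma_strict_antimono_on[of b0], where x = 0 and y = "b0 - zb"]
      assms zb by auto
  moreover have "G 0 b0 \<le> G (b0 - zb) b0"
    using astar_min \<open>astar = 0\<close> \<open>bstar = b0\<close> assms zb by auto
  ultimately show False by simp
qed

theorem optimal_barriers:
  "(b0 \<le> zb \<longrightarrow> astar = 0) \<and> (zb < b0 \<longrightarrow> 0 < astar \<and> astar < bstar)
    \<and> min b0 zb \<le> bstar \<and> bstar \<le> b0"
proof (cases "b0 \<le> zb")
  case True
  then have "astar = 0" using bstar_le_b0 by (intro astar_eq_0_if_bstar_le_zb) simp
  then show ?thesis using True bstar_eq_b0_if_astar_eq_0 by simp
next
  case False
  then have "zb < bstar"
    using astar_eq_0_if_bstar_le_zb bstar_eq_b0_if_astar_eq_0 by fastforce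
  then show ?thesis
    using False astar_pos_if_zb_less_b0 astar_less_bstar bstar_le_b0 by simp
qed

end

theorem mainTheorem4:
  fixes gam sig :: real and Lm :: "real measure"
    and q \<delta> \<beta> \<rho> :: real
    and WW W :: "real \<Rightarrow> real"
    and dX b0 zb astar bstar :: real
  assumes levy: "fm_levy_measure Lm"
    and not_sub: "\<not> is_subordinator_LK gam sig Lm"
    and q: "q > 0" and delta: "\<delta> > 0" and beta: "0 < \<beta>" "\<beta> < 1"
    and WW: "is_scale_function (psiLK gam sig Lm) q WW"
    and W: "is_scale_function (\<lambda>\<theta>. psiLK gam sig Lm \<theta> + \<delta> * \<theta>) q W"
    and dX: "((\<lambda>\<theta>. psiLK gam sig Lm \<theta> + \<delta> * \<theta>) has_real_derivative dX) (at 0 within {0..})"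
    and Gam00: "GammaF q \<delta> \<beta> \<rho> WW W dX 0 0 > 0"
    and b0: "b0 \<ge> 0" "Zbar q W b0 = (\<delta> - q * \<rho>) / (q * \<beta>) - dX / q"
    and zb: "zb \<ge> 0" "Zfun q W zb = 1 / \<beta>"
    and bstar: "bstar > 0"
    and astar: "astar \<in> {0..bstar}"
    and astar_min: "\<forall>a\<in>{0..bstar}. GammaF q \<delta> \<beta> \<rho> WW W dX astar bstar
                                      \<le> GammaF q \<delta> \<beta> \<rho> WW W dX a bstar"
    and min_zero: "GammaF q \<delta> \<beta> \<rho> WW W dX astar bstar = 0"
  shows "b0 > 0 \<and> GammaF q \<delta> \<beta> \<rho> WW W dX 0 b0 = 0
       \<and> (b0 \<le> zb \<longrightarrow> astar = 0)
       \<and> (b0 > zb \<longrightarrow> 0 < astar \<and> astar < bstar)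
       \<and> min b0 zb \<le> bstar \<and> bstar \<le> b0"
proof -
  \<comment> \<open>\<open>dX\<close> enters \<open>\<Gamma>\<close> only as a number.\<close>
  have psi_Y: "filterlim (\<lambda>n. psiLK gam sig Lm (real n)) at_top sequentially"
    using levy not_sub by (rule psiLK_tendsto_at_top)
  have psi_X: "filterlim (\<lambda>n. psiLK gam sig Lm (real n) + \<delta> * real n) at_top sequentially"
    using psi_Y by (rule filterlim_at_top_mono) (use delta in \<open>simp add: always_eventually\<close>)
  have setting: "Gamma_setting q \<delta> \<beta> zb WW W"
    using q delta beta zb scale_function_continuous_on[OF WW] scale_function_strict_mono_on[OF WW]
      scale_function_continuous_on[OF W] scale_function_strict_mono_on[OF W]
      scale_function_nonneg_0[OF WW psi_Y] scale_function_nonneg_0[OF W psi_X]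
    by unfold_locales simp_all
  have b0_root: "0 < b0" "GammaF q \<delta> \<beta> \<rho> WW W dX 0 b0 = 0"
    using Gamma_setting.Gamma_0_left_root[OF setting Gam00 b0] by simp_all
  interpret Gamma_minimiser q \<delta> \<beta> \<rho> dX zb WW W b0 astar bstar
    using setting b0(1) b0_root(2) bstar astar astar_min min_zero
    by (simp add: Gamma_minimiser_def Gamma_minimiser_axioms_def)
  show ?thesis using b0_root optimal_barriers by blast
qed

end
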